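(* Let $k\ge 1$ and let $G$ be a maximal $k$-degenerate graph with at least $k+2$ vertices. Then no two vertices of degree exactly $k$ in $G$ are adjacent.
   Context: $G$ is a finite simple undirected graph. For a vertex ordering $\phi:V\to\{1,\dots,|V|\}$ and a vertex $v$, let $d_p(v)$ be the number of neighbours $u$ of $v$ with $\phi(u)<\phi(v)$. $G$ is a maximal $k$-degenerate graph if it has a vertex ordering $\phi$ with $d_p(v)=\min(k,\phi(v)-1)$ for every vertex $v$. *)

theory Defs
  imports Main
begin

definition simple_graph :: "'a set \<Rightarrow> ('a \<Rightarrow> 'a \<Rightarrow> bool) \<Rightarrow> bool" where
  "simple_graph V E \<longleftrightarrow> finite V \<and> (\<forall>u v. E u v \<longrightarrow> u \<in> V \<and> v \<in> V) \<and>
     (\<forall>u v. E u v \<longrightarrow> E v u) \<and> (\<forall>v. \<not> E v v)"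

definition degree :: "'a set \<Rightarrow> ('a \<Rightarrow> 'a \<Rightarrow> bool) \<Rightarrow> 'a \<Rightarrow> nat" where
  "degree V E v = card {u \<in> V. E v u}"

definition pred_degree :: "'a set \<Rightarrow> ('a \<Rightarrow> 'a \<Rightarrow> bool) \<Rightarrow> ('a \<Rightarrow> nat) \<Rightarrow> 'a \<Rightarrow> nat" where
  "pred_degree V E phi v = card {u \<in> V. E v u \<and> phi u < phi v}"

definition maximal_k_degenerate :: "nat \<Rightarrow> 'a set \<Rightarrow> ('a \<Rightarrow> 'a \<Rightarrow> bool) \<Rightarrow> bool" where
  "maximal_k_degenerate k V E \<longleftrightarrow> simple_graph V E \<and>
     (\<exists>phi. bij_betw phi V {1..card V} \<and>
        (\<forall>v\<in>V. pred_degree V E phi v = min k (phi v - 1)))"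

end

theory Submission
  imports Defs
begin

text \<open>The first k+1 vertices of the ordering form a clique K. A vertex of degree k that lies in K
is therefore adjacent exactly to the rest of K, and one outside K (or the last vertex of K) is
adjacent exactly to its k predecessors. So if u, v of degree k were adjacent with u before v, then
u \<in> K, hence v \<in> K, and neither has a neighbour outside K. The vertex w in position k+2 then has
its k predecessors in K - {u, v}, a set of only k-1 vertices.\<close>

locale maximal_degenerate_ordering =
  fixes k :: nat and V :: "'a set" and E :: "'a \<Rightarrow> 'a \<Rightarrow> bool" and phi :: "'a \<Rightarrow> nat"
  assumes simple: "simple_graph V E"
    and bij: "bij_betw phi V {1..card V}"
    and pred_degree_eq: "v \<in> V \<Longrightarrow> pred_degree V E phi v = min k (phi v - 1)"
begin

lemma finite_V: "finite V"
  using simple by (simp add: simple_graph_def)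

lemma edge_sym: "E u v \<Longrightarrow> E v u"
  using simple by (simp add: simple_graph_def)

lemma no_loop: "\<not> E v v"
  using simple by (simp add: simple_graph_def)

lemma phi_range: "v \<in> V \<Longrightarrow> 1 \<le> phi v \<and> phi v \<le> card V"
  using bij by (auto simp: bij_betw_def)

lemma phi_inj: "u \<in> V \<Longrightarrow> v \<in> V \<Longrightarrow> phi u = phi v \<Longrightarrow> u = v"
  using bij by (auto simp: bij_betw_def inj_on_def)

lemma obtain_vertex_at:
  assumes "1 \<le> i" "i \<le> card V"
  obtains v where "v \<in> V" "phi v = i"
proof -
  have "i \<in> phi ` V"
    using assms bij by (simp add: bij_betw_def)
  then show ?thesis
    using that by blast
qed

definition prefix :: "nat \<Rightarrow> 'a set" where
  "prefix m = {v \<in> V. phi v \<le> m}"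

lemma finite_prefix: "finite (prefix m)"
  using finite_V by (simp add: prefix_def)

lemma card_prefix:
  assumes "m \<le> card V"
  shows "card (prefix m) = m"
proof -
  have "phi ` prefix m = {1..m}"
  proof
    show "phi ` prefix m \<subseteq> {1..m}"
      using phi_range by (auto simp: prefix_def)
    show "{1..m} \<subseteq> phi ` prefix m"
    proof
      fix i
      assume "i \<in> {1..m}"
      then obtain v where "v \<in> V" "phi v = i"
        using assms obtain_vertex_at[of i] by auto
      then show "i \<in> phi ` prefix m"
        using \<open>i \<in> {1..m}\<close> by (force simp: prefix_def)
    qed
  qed
  moreover have "inj_on phi (prefix m)"
    using bij by (auto simp: prefix_def bij_betw_def intro: inj_on_subset)
  ultimately show ?thesis
    by (metis card_atLeastAtMost card_image diff_Suc_1)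
qed

abbreviation neighbours :: "'a \<Rightarrow> 'a set" where
  "neighbours x \<equiv> {u \<in> V. E x u}"

abbreviation earlier_neighbours :: "'a \<Rightarrow> 'a set" where
  "earlier_neighbours x \<equiv> {u \<in> V. E x u \<and> phi u < phi x}"

lemma card_earlier_neighbours: "x \<in> V \<Longrightarrow> card (earlier_neighbours x) = min k (phi x - 1)"
  using pred_degree_eq by (simp add: pred_degree_def)

lemma earlier_neighbours_of_prefix:
  assumes "x \<in> V" "phi x \<le> k + 1"
  shows "earlier_neighbours x = prefix (phi x - 1)"
proof (rule card_subset_eq)
  show "finite (prefix (phi x - 1))"
    by (rule finite_prefix)
  show "earlier_neighbours x \<subseteq> prefix (phi x - 1)"
    by (auto simp: prefix_def)
  have "card (prefix (phi x - 1)) = phi x - 1"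
    using phi_range[OF assms(1)] card_prefix[of "phi x - 1"] by linarith
  then show "card (earlier_neighbours x) = card (prefix (phi x - 1))"
    using card_earlier_neighbours[OF assms(1)] assms(2) by simp
qed

lemma prefix_clique:
  assumes "x \<in> prefix (k + 1)" "y \<in> prefix (k + 1)" "x \<noteq> y"
  shows "E x y"
proof -
  have xy: "x \<in> V" "y \<in> V" "phi x \<le> k + 1" "phi y \<le> k + 1"
    using assms(1,2) by (auto simp: prefix_def)
  have "phi x \<noteq> phi y"
    using phi_inj xy assms(3) by blast
  then consider "phi y < phi x" | "phi x < phi y"
    by linarith
  then show ?thesis
  proof cases
    case 1
    then have "y \<in> earlier_neighbours x"
      using xy earlier_neighbours_of_prefix[of x] by (auto simp: prefix_def)
    then show ?thesis by simp
  next
    case 2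
    then have "x \<in> earlier_neighbours y"
      using xy earlier_neighbours_of_prefix[of y] by (auto simp: prefix_def)
    then show ?thesis by (simp add: edge_sym)
  qed
qed

lemma neighbours_of_low_degree_in_prefix:
  assumes "card V \<ge> k + 1" "x \<in> prefix (k + 1)" "degree V E x \<le> k"
  shows "neighbours x = prefix (k + 1) - {x}"
proof -
  have "prefix (k + 1) - {x} \<subseteq> neighbours x"
    using prefix_clique assms(2) by (auto simp: prefix_def)
  moreover have "card (prefix (k + 1) - {x}) = k"
    using assms(1,2) by (simp add: card_prefix finite_prefix)
  ultimately show ?thesis
    using card_seteq[of "neighbours x" "prefix (k + 1) - {x}"] assms(3) finite_V
    by (simp add: degree_def)
qed

lemma neighbours_of_low_degree_late:
  assumes "x \<in> V" "phi x \<ge> k + 1" "degree V E x \<le> k"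
  shows "neighbours x = earlier_neighbours x"
proof -
  have "card (earlier_neighbours x) = k"
    using card_earlier_neighbours[OF assms(1)] assms(2) by simp
  then show ?thesis
    using card_seteq[of "neighbours x" "earlier_neighbours x"] assms(3) finite_V
    by (force simp: degree_def)
qed

lemma degree_k_vertices_not_adjacent_ordered:
  assumes "k \<ge> 1" "card V \<ge> k + 2"
    and uv: "u \<in> V" "v \<in> V" "degree V E u = k" "degree V E v = k" "phi u < phi v"
  shows "\<not> E u v"
proof
  assume "E u v"
  have "phi u < k + 1"
  proof (rule ccontr)
    assume "\<not> phi u < k + 1"
    then have "neighbours u = earlier_neighbours u"
      using neighbours_of_low_degree_late uv(1,3) by simp
    moreover have "v \<in> neighbours u"
      using \<open>E u v\<close> uv(2) by simp
    ultimately have "phi v < phi u"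
      by simp
    then show False
      using uv(5) by simp
  qed
  then have u_in: "u \<in> prefix (k + 1)"
    using uv by (simp add: prefix_def)
  then have Nu: "neighbours u = prefix (k + 1) - {u}"
    using assms neighbours_of_low_degree_in_prefix by simp
  then have v_in: "v \<in> prefix (k + 1)"
    using \<open>E u v\<close> uv by blast
  then have Nv: "neighbours v = prefix (k + 1) - {v}"
    using assms neighbours_of_low_degree_in_prefix by simp
  obtain w where w: "w \<in> V" "phi w = k + 2"
    using assms(2) obtain_vertex_at[of "k + 2"] by auto
  have "w \<notin> prefix (k + 1)"
    using w by (simp add: prefix_def)
  then have "\<not> E w u" "\<not> E w v"
    using Nu Nv w by (auto dest: edge_sym)
  then have "earlier_neighbours w \<subseteq> prefix (k + 1) - {u, v}"
    using w by (auto simp: prefix_def)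
  moreover have "card (prefix (k + 1) - {u, v}) = k - 1"
  proof -
    have "u \<noteq> v"
      using \<open>E u v\<close> no_loop by blast
    then have "card {u, v} = 2"
      by simp
    then show ?thesis
      using u_in v_in assms(2) card_prefix[of "k + 1"]
      by (simp add: card_Diff_subset finite_prefix)
  qed
  ultimately have "card (earlier_neighbours w) \<le> k - 1"
    by (metis card_mono finite_Diff finite_prefix)
  moreover have "card (earlier_neighbours w) = k"
    using card_earlier_neighbours[OF w(1)] w(2) by simp
  ultimately show False
    using assms(1) by simp
qed

end

theorem mainTheorem12:
  fixes V :: "'a set" and E :: "'a \<Rightarrow> 'a \<Rightarrow> bool" and k :: nat
  assumes "k \<ge> 1"
    and "maximal_k_degenerate k V E"
    and "card V \<ge> k + 2"
  shows "\<forall>u\<in>V. \<forall>v\<in>V. degree V E u = k \<and> degree V E v = k \<longrightarrow> \<not> E u v"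
proof -
  obtain phi where "maximal_degenerate_ordering k V E phi"
    using assms(2) unfolding maximal_k_degenerate_def maximal_degenerate_ordering_def by blast
  then interpret maximal_degenerate_ordering k V E phi .
  show ?thesis
  proof (intro ballI impI notI)
    fix u v
    assume uv: "u \<in> V" "v \<in> V" "degree V E u = k \<and> degree V E v = k" "E u v"
    then have "phi u \<noteq> phi v"
      using phi_inj no_loop by blast
    then consider "phi u < phi v" | "phi v < phi u"
      by linarith
    then show False
      using degree_k_vertices_not_adjacent_ordered[OF assms(1,3)] uv edge_sym by cases blast+
  qed
qed

end
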